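(* Let $P$ be a nice polygon with an even number $n$ of vertices $A_0,\dots,A_{n-1}$ (indices mod $n$) and center $O$, and let $f\colon P\to\mathbb{R}$ be convex on every triangle $OA_kA_{k+1}$, $k=0,\dots,n-1$. Then $$\operatorname{Avg}(f,P)\le\frac13\cdot\frac{1}{n/2}\sum_{k\ \mathrm{odd}}f(A_k)+\frac23\cdot\frac{1}{n/2}\sum_{k\ \mathrm{even}}\operatorname{Avg}(f,OA_k),$$ $$\operatorname{Avg}(f,P)\le\frac13\cdot\frac{1}{n/2}\sum_{k\ \mathrm{even}}f(A_k)+\frac23\cdot\frac{1}{n/2}\sum_{k\ \mathrm{odd}}\operatorname{Avg}(f,OA_k),$$ where the sums run over $k\in\{0,\dots,n-1\}$.
   Context: A nice polygon is a star-shaped polygon $P$ with vertices $A_0,\dots,A_{n-1}$ for which there exists a point $O$ (called its center) in the kernel of $P$ such that all triangles $OA_kA_{k+1}$, $k=0,\dots,n-1$ (indices mod $n$), have the same area. $\operatorname{Avg}(f,P)$ is the average of $f$ over $P$ with respect to area, and $\operatorname{Avg}(f,OA_k)$ is the average of $f$ over the segment $OA_k$ with respect to length. *)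

theory Defs
  imports "HOL-Analysis.Analysis"
begin

fun polygonal_path :: "(real^2) list \<Rightarrow> real \<Rightarrow> real^2" where
  "polygonal_path [] = linepath 0 0"
| "polygonal_path [p] = linepath p p"
| "polygonal_path [p, q] = linepath p q"
| "polygonal_path (p # q # r # ps) = linepath p q +++ polygonal_path (q # r # ps)"

definition polygon_boundary :: "nat \<Rightarrow> (nat \<Rightarrow> real^2) \<Rightarrow> real \<Rightarrow> real^2" where
  "polygon_boundary n A = polygonal_path (map A [0..<n] @ [A 0])"

definition polygon_region :: "nat \<Rightarrow> (nat \<Rightarrow> real^2) \<Rightarrow> (real^2) set" where
  "polygon_region n A = path_image (polygon_boundary n A) \<union> inside (path_image (polygon_boundary n A))"

definition simple_polygon :: "nat \<Rightarrow> (nat \<Rightarrow> real^2) \<Rightarrow> bool" where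
  "simple_polygon n A \<longleftrightarrow> 3 \<le> n \<and> simple_path (polygon_boundary n A)"

definition kernel :: "(real^2) set \<Rightarrow> (real^2) set" where
  "kernel P = {c \<in> P. \<forall>x\<in>P. closed_segment c x \<subseteq> P}"

definition triangle :: "real^2 \<Rightarrow> real^2 \<Rightarrow> real^2 \<Rightarrow> (real^2) set" where
  "triangle a b c = convex hull {a, b, c}"

definition nice_polygon :: "nat \<Rightarrow> (nat \<Rightarrow> real^2) \<Rightarrow> real^2 \<Rightarrow> bool" where
  "nice_polygon n A c \<longleftrightarrow> simple_polygon n A \<and> c \<in> kernel (polygon_region n A) \<and>
     (\<forall>k<n. measure lebesgue (triangle c (A k) (A (Suc k mod n)))
            = measure lebesgue (triangle c (A 0) (A (Suc 0 mod n))))"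

definition avg_area :: "(real^2 \<Rightarrow> real) \<Rightarrow> (real^2) set \<Rightarrow> real" where
  "avg_area f P = integral P f / measure lebesgue P"

(* average of f over the segment [a,b] w.r.t. length (constant-speed parametrisation) *)
definition avg_segment :: "(real^2 \<Rightarrow> real) \<Rightarrow> real^2 \<Rightarrow> real^2 \<Rightarrow> real" where
  "avg_segment f a b = integral {0..1} (\<lambda>t. f ((1 - t) *\<^sub>R a + t *\<^sub>R b))"

end

theory Submission
  imports Defs
begin

text \<open>The triangle O A B is the image of the unit square under
  (u, t) \<mapsto> (1 - t) ((1 - u) O + u A) + t B, with Jacobian proportional to 1 - t. Convexity
  along the segment from (1 - u) O + u A to the apex B bounds f there by
  (1 - t) f((1 - u) O + u A) + t f(B), and integrating this bound gives
  Avg(f, OAB) \<le> 1/3 f(B) + 2/3 Avg(f, OA); either endpoint of the edge AB may serve as the apex.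
  Since O lies in the kernel, the triangles O A_k A_(k+1) cover P and, by the Jordan curve theorem,
  overlap only in null sets; as they have equal areas, Avg(f, P) is the mean of the triangle
  averages. For even n the parity of the vertices alternates around the polygon, so taking in
  every triangle its odd (or in every triangle its even) vertex as apex uses each vertex of that
  parity twice as an apex and each vertex of the other parity twice as the end of a segment
  from O.\<close>

section \<open>Integrals over the unit square\<close>

lemma Basis_real2: "(Basis :: (real^2) set) = {axis 1 1, axis 2 1}"
  by (auto simp: Basis_vec_def UNIV_2)

lemma has_integral_separable_nonneg:
  fixes \<alpha> \<beta> :: "real \<Rightarrow> real"
  assumes ma: "(\<lambda>u. indicator {0..1} u * \<alpha> u) \<in> borel_measurable borel"
    and mb: "(\<lambda>u. indicator {0..1} u * \<beta> u) \<in> borel_measurable borel"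
    and na: "\<And>u. u \<in> {0..1} \<Longrightarrow> 0 \<le> \<alpha> u"
    and nb: "\<And>u. u \<in> {0..1} \<Longrightarrow> 0 \<le> \<beta> u"
    and ia: "(\<alpha> has_integral A) {0..1}"
    and ib: "(\<beta> has_integral B) {0..1}"
  shows "((\<lambda>v::real^2. \<beta> (v$1) * \<alpha> (v$2)) has_integral B * A) (cbox 0 1)"
proof -
  define F1 where "F1 = (\<lambda>u. indicator {0..1} u * \<beta> u)"
  define F2 where "F2 = (\<lambda>u. indicator {0..1} u * \<alpha> u)"
  define fb where "fb = (\<lambda>b::real^2. if b = axis 1 1 then (\<lambda>x. ennreal (F1 x)) else (\<lambda>x. ennreal (F2 x)))"
  have axis_neq: "axis 1 (1::real) \<noteq> (axis 2 1 :: real^2)"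
    by (simp add: axis_eq_axis)
  have F1n: "0 \<le> F1 x" for x using nb by (simp add: F1_def indicator_def)
  have F2n: "0 \<le> F2 x" for x using na by (simp add: F2_def indicator_def)
  have A0: "0 \<le> A" using ia na by (rule has_integral_nonneg)
  have B0: "0 \<le> B" using ib nb by (rule has_integral_nonneg)
  have prodeq: "(\<Prod>b\<in>Basis. fb b (x \<bullet> b)) = ennreal (F1 (x$1) * F2 (x$2))" for x :: "real^2"
    using axis_neq F1n F2n by (simp add: Basis_real2 fb_def cart_eq_inner_axis ennreal_mult)
  have "(\<integral>\<^sup>+x. (\<Prod>b\<in>Basis. fb b (x \<bullet> b)) \<partial>lborel) = (\<Prod>b\<in>(Basis::(real^2) set). (\<integral>\<^sup>+x. fb b x \<partial>lborel))"
    by (rule nn_integral_lborel_prod)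
      (auto simp: fb_def F1_def F2_def intro!: measurable_compose[OF ma] measurable_compose[OF mb])
  also have "\<dots> = (\<integral>\<^sup>+x. F1 x \<partial>lborel) * (\<integral>\<^sup>+x. F2 x \<partial>lborel)"
    using axis_neq by (simp add: Basis_real2 fb_def)
  also have "(\<integral>\<^sup>+x. F1 x \<partial>lborel) = ennreal B"
    unfolding F1_def using nn_integral_has_integral_lebesgue[OF nb ib] by simp
  also have "(\<integral>\<^sup>+x. F2 x \<partial>lborel) = ennreal A"
    unfolding F2_def using nn_integral_has_integral_lebesgue[OF na ia] by simp
  finally have nn: "(\<integral>\<^sup>+x. (F1 ((x::real^2)$1) * F2 (x$2)) \<partial>lborel) = ennreal (B * A)"
    by (simp add: prodeq ennreal_mult A0 B0 flip: ennreal_mult)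
  have "F1 \<in> borel_measurable borel" "F2 \<in> borel_measurable borel"
    using ma mb by (auto simp: F1_def F2_def)
  then have meas: "(\<lambda>x::real^2. F1 (x$1) * F2 (x$2)) \<in> borel_measurable borel"
    by measurable
  have "((\<lambda>x::real^2. F1 (x$1) * F2 (x$2)) has_integral (B * A)) UNIV"
    by (rule nn_integral_has_integral[OF meas _ nn]) (use F1n F2n A0 B0 in auto)
  moreover have "(\<lambda>x::real^2. F1 (x$1) * F2 (x$2)) = (\<lambda>x. if x \<in> cbox 0 1 then \<beta> (x$1) * \<alpha> (x$2) else 0)"
    by (auto simp: fun_eq_iff F1_def F2_def indicator_def mem_box_cart forall_2)
  ultimately show ?thesis
    by (simp add: has_integral_restrict_UNIV)
qed

lemma convex_on_indicator_borel_measurable: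
  fixes \<phi> :: "real \<Rightarrow> real"
  assumes "convex_on {0..1} \<phi>"
  shows "(\<lambda>u. indicator {0..1} u * \<phi> u) \<in> borel_measurable borel"
proof -
  have "convex_on {0<..<1} \<phi>"
    by (rule convex_on_subset[OF assms]) auto
  then have "continuous_on {0<..<1} \<phi>"
    by (simp add: convex_on_continuous)
  then have "(\<lambda>u. indicator {0<..<1} u * \<phi> u) \<in> borel_measurable borel"
    using borel_measurable_continuous_on_indicator[of "{0<..<1}" \<phi>] by simp
  moreover have "(\<lambda>u. indicator {0..1} u * \<phi> u)
      = (\<lambda>u. indicator {0<..<1} u * \<phi> u + indicator {0} u * \<phi> 0 + indicator {1} u * \<phi> 1)"
    by (auto simp: fun_eq_iff indicator_def)
  ultimately show ?thesis
    by simp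
qed

lemma has_integral_separable:
  fixes \<alpha> \<beta> :: "real \<Rightarrow> real"
  assumes \<alpha>: "continuous_on {0..1} \<alpha>" "\<And>u. u \<in> {0..1} \<Longrightarrow> 0 \<le> \<alpha> u" "(\<alpha> has_integral A) {0..1}"
    and \<beta>: "convex_on {0..1} \<beta>" "\<And>u. u \<in> {0..1} \<Longrightarrow> - M \<le> \<beta> u" "(\<beta> has_integral B) {0..1}"
  shows "((\<lambda>v::real^2. \<beta> (v$1) * \<alpha> (v$2)) has_integral B * A) (cbox 0 1)"
proof -
  have const: "((\<lambda>u::real. c) has_integral c) {0..1}" for c
    using has_integral_const_real[of c 0 1] by simp
  have ma: "(\<lambda>u. indicator {0..1} u * \<alpha> u) \<in> borel_measurable borel"
    using borel_measurable_continuous_on_indicator[OF _ \<alpha>(1)] by simp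
  have "(\<lambda>u. indicator {0..1} u * (\<beta> u + \<bar>M\<bar>)) \<in> borel_measurable borel"
    using convex_on_indicator_borel_measurable[OF \<beta>(1)] by (simp add: distrib_left)
  then have shifted: "((\<lambda>v::real^2. (\<beta> (v$1) + \<bar>M\<bar>) * \<alpha> (v$2)) has_integral (B + \<bar>M\<bar>) * A) (cbox 0 1)"
    using \<beta>(2) by (intro has_integral_separable_nonneg[OF ma _ \<alpha>(2) _ \<alpha>(3)]
        has_integral_add[OF \<beta>(3) const]) force+
  have "((\<lambda>v::real^2. \<bar>M\<bar> * \<alpha> (v$2)) has_integral \<bar>M\<bar> * A) (cbox 0 1)"
    using has_integral_separable_nonneg[OF ma _ \<alpha>(2) _ \<alpha>(3) const, of "\<bar>M\<bar>"]
      convex_on_indicator_borel_measurable[of "\<lambda>_. \<bar>M\<bar>"] by (simp add: convex_on_const)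
  from has_integral_diff[OF shifted this] show ?thesis
    by (simp add: algebra_simps)
qed

lemma has_integral_01_antiderivative:
  fixes F f :: "real \<Rightarrow> real"
  assumes "\<And>x. (F has_real_derivative f x) (at x)"
  shows "(f has_integral (F 1 - F 0)) {0..1}"
  by (rule fundamental_theorem_of_calculus)
    (auto intro: has_field_derivative_at_within assms
      simp: has_real_derivative_iff_has_vector_derivative[symmetric])

text \<open>The weight 1 - v$2 is the Jacobian of the parametrisation of a triangle by the unit
  square (triangle_param below); the bracket bounds f by convexity along the segment to the apex.\<close>
lemma has_integral_cone_majorant:
  fixes \<phi> :: "real \<Rightarrow> real"
  assumes "convex_on {0..1} \<phi>" "\<And>u. u \<in> {0..1} \<Longrightarrow> - M \<le> \<phi> u" "(\<phi> has_integral I) {0..1}"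
  shows "((\<lambda>v::real^2. (1 - v$2) * ((1 - v$2) * \<phi> (v$1) + v$2 * y)) has_integral I / 3 + y / 6)
           (cbox 0 1)"
proof -
  have "((\<lambda>t::real. (1 - t)^2) has_integral (\<lambda>t. - ((1 - t)^3 / 3)) 1 - (\<lambda>t. - ((1 - t)^3 / 3)) 0)
      {0..1}"
    by (rule has_integral_01_antiderivative)
      (auto intro!: derivative_eq_intros simp: power2_eq_square power3_eq_cube field_simps)
  then have sq: "((\<lambda>t::real. (1 - t)^2) has_integral 1/3) {0..1}"
    by simp
  have "((\<lambda>t::real. t * (1 - t)) has_integral (\<lambda>t. t^2/2 - t^3/3) 1 - (\<lambda>t. t^2/2 - t^3/3) 0) {0..1}"
    by (rule has_integral_01_antiderivative)
      (auto intro!: derivative_eq_intros simp: power2_eq_square power3_eq_cube algebra_simps)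
  then have tt: "((\<lambda>t::real. t * (1 - t)) has_integral 1/6) {0..1}"
    by simp
  have i2: "((\<lambda>v::real^2. \<phi> (v$1) * (1 - v$2)^2) has_integral I * (1/3)) (cbox 0 1)"
    by (rule has_integral_separable[OF _ _ sq assms]) (auto intro!: continuous_intros)
  have const: "((\<lambda>u::real. y) has_integral y) {0..1}"
    using has_integral_const_real[of y 0 1] by simp
  have i3: "((\<lambda>v::real^2. y * (v$2 * (1 - v$2))) has_integral y * (1/6)) (cbox 0 1)"
    by (rule has_integral_separable[OF _ _ tt _ _ const, of "\<bar>y\<bar>"])
      (auto intro!: continuous_intros simp: convex_on_const)
  from has_integral_add[OF i2 i3] show ?thesis
    by (simp add: power2_eq_square algebra_simps)
qed

section \<open>Convex functions on triangles\<close>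

lemma convex_on_segment_param:
  assumes "convex_on S f" "a \<in> S" "b \<in> S"
  shows "convex_on {0..1} (\<lambda>u. f ((1 - u) *\<^sub>R a + u *\<^sub>R b))"
proof (rule convex_onI)
  fix t x y :: real
  assume t: "0 < t" "t < 1" and xy: "x \<in> {0..1}" "y \<in> {0..1}"
  have mem: "(1 - u) *\<^sub>R a + u *\<^sub>R b \<in> S" if "u \<in> {0..1}" for u
    using assms that convex_on_imp_convex[OF assms(1)] unfolding convex_alt by auto
  have "(1 - ((1 - t) * x + t * y)) *\<^sub>R a + ((1 - t) * x + t * y) *\<^sub>R b
      = (1 - t) *\<^sub>R ((1 - x) *\<^sub>R a + x *\<^sub>R b) + t *\<^sub>R ((1 - y) *\<^sub>R a + y *\<^sub>R b)"
    by (simp add: algebra_simps)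
  then show "f ((1 - ((1 - t) *\<^sub>R x + t *\<^sub>R y)) *\<^sub>R a + ((1 - t) *\<^sub>R x + t *\<^sub>R y) *\<^sub>R b)
      \<le> (1 - t) * f ((1 - x) *\<^sub>R a + x *\<^sub>R b) + t * f ((1 - y) *\<^sub>R a + y *\<^sub>R b)"
    using convex_onD[OF assms(1), of t] mem xy t by simp
qed simp

lemma in_convex_hull_3I:
  assumes "0 \<le> u" "0 \<le> v" "0 \<le> w" "u + v + w = 1"
  shows "u *\<^sub>R a + v *\<^sub>R b + w *\<^sub>R c \<in> convex hull {a, b, c}"
  unfolding convex_hull_3 using assms by blast

text \<open>Above, a convex function is bounded by its values at the vertices; below, by reflecting
  through the centroid m: writing m = x/3 + 2y/3 with y in the triangle gives
  f x \<ge> 3 f m - 2 max f.\<close>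
lemma convex_on_triangle_bounded:
  fixes f :: "'a::real_vector \<Rightarrow> real"
  assumes cv: "convex_on (convex hull {a, b, q}) f"
  shows "\<exists>M. \<forall>x\<in>convex hull {a, b, q}. \<bar>f x\<bar> \<le> M"
proof -
  define T where "T = convex hull {a, b, q}"
  define U where "U = max (f a) (max (f b) (f q))"
  have up: "\<forall>x\<in>T. f x \<le> U"
    unfolding T_def by (rule convex_on_convex_hull_bound[OF cv]) (auto simp: U_def)
  define m where "m = (1/3) *\<^sub>R a + (1/3) *\<^sub>R b + (1/3) *\<^sub>R q"
  have lo: "3 * f m - 2 * U \<le> f x" if x: "x \<in> T" for x
  proof -
    obtain u v w where uvw: "0 \<le> u" "0 \<le> v" "0 \<le> w" "u + v + w = 1"
      and xe: "x = u *\<^sub>R a + v *\<^sub>R b + w *\<^sub>R q"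
      using x unfolding T_def convex_hull_3 by blast
    define z where "z = (1 - u) *\<^sub>R a + (1 - v) *\<^sub>R b + (1 - w) *\<^sub>R q"
    define y where "y = (1/2) *\<^sub>R z"
    have "y = ((1 - u)/2) *\<^sub>R a + ((1 - v)/2) *\<^sub>R b + ((1 - w)/2) *\<^sub>R q"
      by (simp add: y_def z_def scaleR_add_right)
    moreover have "(1 - u)/2 + (1 - v)/2 + (1 - w)/2 = 1"
      using uvw(4) by (simp add: field_simps)
    ultimately have yT: "y \<in> T"
      unfolding T_def using uvw by (simp add: in_convex_hull_3I)
    have "x + z = a + b + q"
      by (simp add: xe z_def algebra_simps)
    then have "m = (1 - 2/3) *\<^sub>R x + (2/3) *\<^sub>R y"
      by (simp add: m_def y_def flip: scaleR_add_right)
    then have "f m \<le> (1/3) * f x + (2/3) * f y"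
      using convex_onD[OF cv, of "2/3" x y] x yT unfolding T_def by simp
    moreover have "f y \<le> U"
      using up yT by auto
    ultimately show ?thesis
      by linarith
  qed
  show ?thesis
    using up lo by (intro exI[of _ "\<bar>U\<bar> + \<bar>3 * f m - 2 * U\<bar>"]) (fastforce simp: T_def)
qed

lemma convex_on_bounded_absolutely_integrable_on:
  fixes f :: "'a::euclidean_space \<Rightarrow> real"
  assumes cf: "convex_on T f" and cT: "compact T" and bd: "\<And>x. x \<in> T \<Longrightarrow> \<bar>f x\<bar> \<le> M"
  shows "f absolutely_integrable_on T"
proof -
  have cvT: "convex T"
    using cf by (rule convex_on_imp_convex)
  have "convex_on (interior T) f"
    by (rule convex_on_subset[OF cf interior_subset]) (simp add: convex_interior cvT)
  then have "f \<in> borel_measurable (lebesgue_on (interior T))"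
    by (intro continuous_imp_measurable_on_sets_lebesgue) (simp_all add: convex_on_continuous)
  then have "f measurable_on interior T"
    by (simp add: measurable_on_iff_borel_measurable)
  moreover have "negligible (sym_diff (interior T) T)"
  proof (rule negligible_subset[OF negligible_convex_frontier[OF cvT]])
    show "sym_diff (interior T) T \<subseteq> frontier T"
      using interior_subset[of T] compact_imp_closed[OF cT] unfolding frontier_def by auto
  qed
  ultimately have "f measurable_on T"
    by (rule measurable_on_spike_set)
  then have "f \<in> borel_measurable (lebesgue_on T)"
    using cT measurable_on_iff_borel_measurable lmeasurable_compact fmeasurableD by blast
  then show ?thesis
    using cT bd
    by (intro measurable_bounded_by_integrable_imp_absolutely_integrable[where g = "\<lambda>x. M"])
      (auto simp: lmeasurable_compact fmeasurableD integrable_on_const)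
qed

lemma convex_on_triangle_absolutely_integrable_on:
  fixes f :: "'a::euclidean_space \<Rightarrow> real"
  assumes "convex_on (convex hull {a, b, q}) f"
  shows "f absolutely_integrable_on convex hull {a, b, q}"
  using convex_on_triangle_bounded[OF assms] compact_convex_hull[of "{a, b, q}"]
  by (auto intro: convex_on_bounded_absolutely_integrable_on[OF assms])

lemma absolutely_integrable_change_of_variables_real:
  fixes f :: "real^'n::{finite,wellorder} \<Rightarrow> real" and g :: "real^'n::_ \<Rightarrow> real^'n::_"
  assumes S: "S \<in> sets lebesgue"
    and der: "\<And>x. x \<in> S \<Longrightarrow> (g has_derivative g' x) (at x within S)"
    and inj: "inj_on g S"
    and fi: "f absolutely_integrable_on (g ` S)"
  shows "(\<lambda>x. \<bar>det (matrix (g' x))\<bar> * f (g x)) absolutely_integrable_on S"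
    and "integral (g ` S) f = integral S (\<lambda>x. \<bar>det (matrix (g' x))\<bar> * f (g x))"
proof -
  define F where "F = (\<lambda>x. vec (f x) :: real^1)"
  have "F absolutely_integrable_on (g ` S)"
    using fi by (simp add: absolutely_integrable_on_1_iff F_def)
  then have "(\<lambda>x. \<bar>det (matrix (g' x))\<bar> *\<^sub>R F (g x)) absolutely_integrable_on S \<and>
      integral S (\<lambda>x. \<bar>det (matrix (g' x))\<bar> *\<^sub>R F (g x)) = integral (g ` S) F"
    using has_absolute_integral_change_of_variables[OF S der inj, of F "integral (g ` S) F"]
    by blast
  then show "(\<lambda>x. \<bar>det (matrix (g' x))\<bar> * f (g x)) absolutely_integrable_on S"
    and "integral (g ` S) f = integral S (\<lambda>x. \<bar>det (matrix (g' x))\<bar> * f (g x))"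
    by (simp_all add: absolutely_integrable_on_1_iff integral_on_1_eq F_def)
qed

definition cross2 :: "real^2 \<Rightarrow> real^2 \<Rightarrow> real" where
  "cross2 u v = u$1 * v$2 - u$2 * v$1"

lemma cross2_coords_unique:
  assumes "cross2 u w \<noteq> 0" and "s *\<^sub>R u + t *\<^sub>R w = s' *\<^sub>R u + t' *\<^sub>R w"
  shows "s = s'" and "t = t'"
proof -
  have e1: "(s - s') * u$1 + (t - t') * w$1 = 0" and e2: "(s - s') * u$2 + (t - t') * w$2 = 0"
    using assms(2) by (auto simp: vec_eq_iff forall_2 algebra_simps)
  have "(s - s') * cross2 u w = w$2 * ((s - s') * u$1 + (t - t') * w$1) - w$1 * ((s - s') * u$2 + (t - t') * w$2)"
    by (simp add: cross2_def algebra_simps)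
  then show "s = s'"
    using assms(1) unfolding e1 e2 by simp
  have "(t - t') * cross2 u w = u$1 * ((s - s') * u$2 + (t - t') * w$2) - u$2 * ((s - s') * u$1 + (t - t') * w$1)"
    by (simp add: cross2_def algebra_simps)
  then show "t = t'"
    using assms(1) unfolding e1 e2 by simp
qed

lemma measure_triangle:
  "measure lebesgue (convex hull {a, b, q}) = \<bar>cross2 (b - a) (q - a)\<bar> / 2"
proof -
  have "measure lebesgue (convex hull {a, b, q}) = measure lborel (convex hull {a, b, q})"
    by (simp add: compact_imp_closed finite_imp_compact_convex_hull)
  also have "\<dots> = \<bar>- cross2 (b - a) (q - a)\<bar> / 2"
    unfolding content_triangle by (simp add: cross2_def algebra_simps)
  finally show ?thesis
    by simp
qed

definition triangle_param :: "real^2 \<Rightarrow> real^2 \<Rightarrow> real^2 \<Rightarrow> real^2 \<Rightarrow> real^2" where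
  "triangle_param a b q v = (1 - v$2) *\<^sub>R ((1 - v$1) *\<^sub>R a + v$1 *\<^sub>R b) + v$2 *\<^sub>R q"

definition triangle_param_deriv :: "real^2 \<Rightarrow> real^2 \<Rightarrow> real^2 \<Rightarrow> real^2 \<Rightarrow> real^2 \<Rightarrow> real^2" where
  "triangle_param_deriv a b q v =
     (\<lambda>h. (1 - v$2) *\<^sub>R (h$1 *\<^sub>R (b - a)) + h$2 *\<^sub>R (q - ((1 - v$1) *\<^sub>R a + v$1 *\<^sub>R b)))"

definition half_open_square :: "(real^2) set" where
  "half_open_square = {v. 0 \<le> v$1 \<and> v$1 \<le> 1 \<and> 0 \<le> v$2 \<and> v$2 < 1}"

lemma triangle_param_has_derivative:
  "(triangle_param a b q has_derivative triangle_param_deriv a b q v) (at v within S)"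
proof -
  have "(triangle_param a b q has_derivative triangle_param_deriv a b q v) (at v)"
    unfolding triangle_param_def triangle_param_deriv_def
    by (rule derivative_eq_intros refl bounded_linear.has_derivative[OF bounded_linear_vec_nth])+
      (simp add: fun_eq_iff algebra_simps)
  then show ?thesis
    by (rule has_derivative_at_withinI)
qed

lemma det_triangle_param_deriv:
  "det (matrix (triangle_param_deriv a b q v)) = (1 - v$2) * cross2 (b - a) (q - a)"
  by (simp add: det_2 matrix_def triangle_param_deriv_def cross2_def axis_def algebra_simps)

lemma triangle_param_eq:
  "triangle_param a b q v = a + ((1 - v$2) * v$1) *\<^sub>R (b - a) + v$2 *\<^sub>R (q - a)"
  by (simp add: triangle_param_def algebra_simps)

lemma inj_on_triangle_param:
  assumes "cross2 (b - a) (q - a) \<noteq> 0"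
  shows "inj_on (triangle_param a b q) half_open_square"
proof (rule inj_onI)
  fix v w assume v: "v \<in> half_open_square" and w: "w \<in> half_open_square"
    and "triangle_param a b q v = triangle_param a b q w"
  then have "((1 - v$2) * v$1) *\<^sub>R (b - a) + v$2 *\<^sub>R (q - a) = ((1 - w$2) * w$1) *\<^sub>R (b - a) + w$2 *\<^sub>R (q - a)"
    by (simp add: triangle_param_eq)
  from cross2_coords_unique[OF assms this]
  have "(1 - v$2) * v$1 = (1 - w$2) * w$1" and "v$2 = w$2"
    by auto
  moreover have "v$2 < 1"
    using v by (simp add: half_open_square_def)
  ultimately show "v = w"
    by (simp add: vec_eq_iff forall_2)
qed

lemma triangle_param_image_subset: "triangle_param a b q ` half_open_square \<subseteq> convex hull {a, b, q}"
proof
  fix x assume "x \<in> triangle_param a b q ` half_open_square"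
  then obtain v where v: "v \<in> half_open_square" and x: "x = triangle_param a b q v"
    by auto
  have "x = ((1 - v$2) * (1 - v$1)) *\<^sub>R a + ((1 - v$2) * v$1) *\<^sub>R b + v$2 *\<^sub>R q"
    by (simp add: x triangle_param_def algebra_simps)
  also have "\<dots> \<in> convex hull {a, b, q}"
  proof (rule in_convex_hull_3I)
    show "0 \<le> (1 - v$2) * (1 - v$1)" "0 \<le> (1 - v$2) * v$1" "0 \<le> v$2"
      using v by (auto simp: half_open_square_def)
    show "(1 - v$2) * (1 - v$1) + (1 - v$2) * v$1 + v$2 = 1"
      by (simp add: algebra_simps)
  qed
  finally show "x \<in> convex hull {a, b, q}" .
qed

lemma triangle_subset_triangle_param_image:
  "convex hull {a, b, q} \<subseteq> insert q (triangle_param a b q ` half_open_square)"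
proof
  fix x assume "x \<in> convex hull {a, b, q}"
  then obtain u v w where uvw: "0 \<le> u" "0 \<le> v" "0 \<le> w" "u + v + w = 1"
    and x: "x = u *\<^sub>R a + v *\<^sub>R b + w *\<^sub>R q"
    unfolding convex_hull_3 by blast
  show "x \<in> insert q (triangle_param a b q ` half_open_square)"
  proof (cases "w = 1")
    case True
    then have "u = 0" "v = 0"
      using uvw by auto
    then show ?thesis
      using True x by simp
  next
    case False
    then have w1: "w < 1"
      using uvw by auto
    define z :: "real^2" where "z = vector [v / (1 - w), w]"
    have "z \<in> half_open_square"
      using uvw w1 by (simp add: half_open_square_def z_def divide_simps)
    moreover have "triangle_param a b q z = x"
    proof -
      have "(1 - w) * (1 - v / (1 - w)) = 1 - w - v" and "(1 - w) * (v / (1 - w)) = v"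
        using w1 by (simp_all add: field_simps)
      moreover have "1 - w - v = u"
        using uvw(4) by simp
      ultimately show ?thesis
        by (simp add: triangle_param_def z_def x scaleR_add_right)
    qed
    ultimately show ?thesis
      by blast
  qed
qed

lemma half_open_square_lebesgue: "half_open_square \<in> sets lebesgue"
proof -
  have "half_open_square = {v. 0 \<le> v$1} \<inter> {v. v$1 \<le> 1} \<inter> {v. 0 \<le> v$2} \<inter> {v. v$2 < (1::real)}"
    by (auto simp: half_open_square_def)
  also have "\<dots> \<in> sets borel"
    by (intro sets.Int borel_closed borel_open closed_Collect_le open_Collect_less continuous_intros)
  finally show ?thesis
    by simp
qed

lemma has_integral_half_open_square:
  fixes h :: "real^2 \<Rightarrow> real"
  assumes "(h has_integral I) (cbox 0 1)"
  shows "(h has_integral I) half_open_square"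
proof -
  have N: "negligible (sym_diff half_open_square (cbox 0 1))"
  proof (rule negligible_subset[OF negligible_standard_hyperplane[of "axis 2 1" 1]])
    show "axis 2 1 \<in> (Basis :: (real^2) set)"
      by (auto simp: Basis_vec_def)
    show "sym_diff half_open_square (cbox 0 1) \<subseteq> {x::real^2. x \<bullet> axis 2 1 = 1}"
      by (auto simp: half_open_square_def mem_box_cart forall_2 inner_axis)
  qed
  have "negligible {x \<in> half_open_square - cbox 0 1. h x \<noteq> 0}"
    "negligible {x \<in> cbox 0 1 - half_open_square. h x \<noteq> 0}"
    by (blast intro: negligible_subset[OF N])+
  then show ?thesis
    using assms has_integral_spike_set_eq by blast
qed

lemma integral_triangle_as_square:
  fixes f :: "real^2 \<Rightarrow> real"
  assumes D: "cross2 (b - a) (q - a) \<noteq> 0" and f: "f absolutely_integrable_on convex hull {a, b, q}"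
  defines "J \<equiv> \<lambda>v. \<bar>cross2 (b - a) (q - a)\<bar> * ((1 - v$2) * f (triangle_param a b q v))"
  shows "J absolutely_integrable_on half_open_square"
    and "integral (convex hull {a, b, q}) f = integral half_open_square J"
proof -
  let ?T = "convex hull {a, b, q}" and ?G = "triangle_param a b q ` half_open_square"
  have "?T - ?G \<subseteq> {q}" "?G - ?T = {}"
    using triangle_param_image_subset[of a b q] triangle_subset_triangle_param_image[of a b q]
    by blast+
  then have spike: "negligible {x \<in> ?T - ?G. h x \<noteq> 0}" "negligible {x \<in> ?G - ?T. h x \<noteq> 0}"
    for h :: "real^2 \<Rightarrow> real"
    by (blast intro: negligible_subset[OF negligible_sing[of q]])+
  have J: "J v = \<bar>det (matrix (triangle_param_deriv a b q v))\<bar> * f (triangle_param a b q v)"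
    if "v \<in> half_open_square" for v
    using that by (simp add: J_def det_triangle_param_deriv abs_mult half_open_square_def)
  have "f absolutely_integrable_on ?G"
    using f absolutely_integrable_spike_set_eq[OF spike] by blast
  note cov = absolutely_integrable_change_of_variables_real[OF half_open_square_lebesgue
      triangle_param_has_derivative inj_on_triangle_param[OF D] this]
  show "J absolutely_integrable_on half_open_square"
    using absolutely_integrable_spike[OF cov(1) negligible_empty] J by simp
  have "integral half_open_square J
      = integral half_open_square (\<lambda>v. \<bar>det (matrix (triangle_param_deriv a b q v))\<bar> * f (triangle_param a b q v))"
    by (rule integral_cong) (rule J)
  then show "integral ?T f = integral half_open_square J"
    using cov(2) integral_spike_set[OF spike] by simp
qed

lemma convex_on_triangle_edge:
  fixes f :: "real^2 \<Rightarrow> real"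
  assumes cv: "convex_on (convex hull {a, b, q}) f"
  defines "\<phi> \<equiv> \<lambda>u. f ((1 - u) *\<^sub>R a + u *\<^sub>R b)"
  shows "convex_on {0..1} \<phi>" and "\<exists>M. \<forall>u\<in>{0..1}. - M \<le> \<phi> u"
    and "(\<phi> has_integral avg_segment f a b) {0..1}"
proof -
  let ?T = "convex hull {a, b, q}"
  obtain M where bd: "\<And>x. x \<in> ?T \<Longrightarrow> \<bar>f x\<bar> \<le> M"
    using convex_on_triangle_bounded[OF cv] by blast
  have edge: "(1 - u) *\<^sub>R a + u *\<^sub>R b \<in> ?T" if "u \<in> {0..1}" for u
    using in_convex_hull_3I[of "1 - u" u 0 a b q] that by simp
  show cv\<phi>: "convex_on {0..1} \<phi>"
    unfolding \<phi>_def using cv by (intro convex_on_segment_param) (auto simp: hull_inc)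
  show "\<exists>M. \<forall>u\<in>{0..1}. - M \<le> \<phi> u"
    using bd edge unfolding \<phi>_def by (metis abs_le_D2 minus_le_iff)
  have "\<phi> absolutely_integrable_on {0..1}"
    using bd edge by (intro convex_on_bounded_absolutely_integrable_on[OF cv\<phi>]) (auto simp: \<phi>_def)
  then show "(\<phi> has_integral avg_segment f a b) {0..1}"
    by (simp add: avg_segment_def \<phi>_def[symmetric] absolutely_integrable_on_def has_integral_integral)
qed

lemma convex_on_triangle_param_le:
  fixes f :: "real^2 \<Rightarrow> real"
  assumes cv: "convex_on (convex hull {a, b, q}) f" and v: "v \<in> half_open_square"
  shows "f (triangle_param a b q v) \<le> (1 - v$2) * f ((1 - v$1) *\<^sub>R a + v$1 *\<^sub>R b) + v$2 * f q"
proof -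
  have "0 \<le> v$1" "v$1 \<le> 1" "0 \<le> v$2" "v$2 \<le> 1"
    using v by (auto simp: half_open_square_def)
  moreover from this have "(1 - v$1) *\<^sub>R a + v$1 *\<^sub>R b \<in> convex hull {a, b, q}"
    using in_convex_hull_3I[of "1 - v$1" "v$1" 0 a b q] by simp
  ultimately show ?thesis
    using convex_onD[OF cv, of "v$2"] by (simp add: triangle_param_def hull_inc)
qed

lemma integral_convex_on_triangle_le:
  fixes f :: "real^2 \<Rightarrow> real"
  assumes cv: "convex_on (convex hull {a, b, q}) f"
  shows "integral (convex hull {a, b, q}) f
           \<le> measure lebesgue (convex hull {a, b, q}) * (1/3 * f q + 2/3 * avg_segment f a b)"
proof (cases "cross2 (b - a) (q - a) = 0")
  case True
  then have "negligible (convex hull {a, b, q})"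
    using measure_triangle[of a b q]
    by (simp add: negligible_iff_measure0 lmeasurable_compact finite_imp_compact_convex_hull)
  then show ?thesis
    using measure_triangle[of a b q] True by (simp add: integral_negligible)
next
  case False
  define \<phi> where "\<phi> = (\<lambda>u. f ((1 - u) *\<^sub>R a + u *\<^sub>R b))"
  define D where "D = \<bar>cross2 (b - a) (q - a)\<bar>"
  note edge = convex_on_triangle_edge[OF cv, folded \<phi>_def]
  obtain M where "\<And>u. u \<in> {0..1} \<Longrightarrow> - M \<le> \<phi> u"
    using edge(2) unfolding \<phi>_def by blast
  from has_integral_mult_right[OF has_integral_cone_majorant[OF edge(1) this edge(3)], of D]
  have majorant: "((\<lambda>v. D * ((1 - v$2) * ((1 - v$2) * \<phi> (v$1) + v$2 * f q)))
      has_integral D * (avg_segment f a b / 3 + f q / 6)) half_open_square"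
    by (rule has_integral_half_open_square)
  have pointwise: "D * ((1 - v$2) * f (triangle_param a b q v))
      \<le> D * ((1 - v$2) * ((1 - v$2) * \<phi> (v$1) + v$2 * f q))" if "v \<in> half_open_square" for v
    using convex_on_triangle_param_le[OF cv that] that
    by (auto simp: D_def \<phi>_def half_open_square_def intro!: mult_left_mono)
  note square = integral_triangle_as_square[OF False convex_on_triangle_absolutely_integrable_on[OF cv]]
  have "integral (convex hull {a, b, q}) f
      = integral half_open_square (\<lambda>v. D * ((1 - v$2) * f (triangle_param a b q v)))"
    using square(2) by (simp add: D_def)
  also have "\<dots> \<le> integral half_open_square (\<lambda>v. D * ((1 - v$2) * ((1 - v$2) * \<phi> (v$1) + v$2 * f q)))"
    using square(1) majorant pointwise unfolding D_def
    by (intro integral_le) (auto simp: absolutely_integrable_on_def has_integral_integrable)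
  also have "\<dots> = D * (avg_segment f a b / 3 + f q / 6)"
    by (rule integral_unique[OF majorant])
  finally show ?thesis
    by (simp add: D_def measure_triangle algebra_simps)
qed

lemma integral_convex_on_triangle_le_apex:
  fixes f :: "real^2 \<Rightarrow> real"
  assumes "convex_on (triangle c p q) f" and "{x, y} = {p, q}"
  shows "integral (triangle c p q) f
           \<le> measure lebesgue (triangle c p q) * (1/3 * f x + 2/3 * avg_segment f c y)"
proof -
  have "triangle c p q = convex hull {c, y, x}"
    using assms(2) unfolding doubleton_eq_iff triangle_def by (auto simp: insert_commute)
  then show ?thesis
    using integral_convex_on_triangle_le[of c y x f] assms(1) by simp
qed

section \<open>Polygonal boundaries\<close>

lemma pathstart_polygonal_path: "ps \<noteq> [] \<Longrightarrow> pathstart (polygonal_path ps) = hd ps"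
  by (induction ps rule: polygonal_path.induct) (auto simp: pathstart_join)

lemma pathfinish_polygonal_path: "ps \<noteq> [] \<Longrightarrow> pathfinish (polygonal_path ps) = last ps"
  by (induction ps rule: polygonal_path.induct) (auto simp: pathfinish_join)

lemma path_image_polygonal_path:
  "2 \<le> length ps \<Longrightarrow>
     path_image (polygonal_path ps) = (\<Union>i<length ps - 1. closed_segment (ps!i) (ps!Suc i))"
proof (induction ps rule: polygonal_path.induct)
  case (4 p q r ps)
  have "{..<length (p # q # r # ps) - 1} = insert 0 (Suc ` {..<length (q # r # ps) - 1})"
    by (simp add: lessThan_Suc_eq_insert_0)
  with 4 show ?case
    by (simp add: path_image_join pathstart_polygonal_path)
qed (simp_all add: lessThan_Suc)

text \<open>The parameter at which polygonal_path, run through m + 1 edges, is at the point with local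
  parameter u of edge i.\<close>
fun polygonal_path_time :: "nat \<Rightarrow> nat \<Rightarrow> real \<Rightarrow> real" where
  "polygonal_path_time 0 i u = u"
| "polygonal_path_time (Suc m) 0 u = u / 2"
| "polygonal_path_time (Suc m) (Suc i) u = 1/2 + polygonal_path_time m i u / 2"

lemma polygonal_path_time_bounds:
  "0 < u \<Longrightarrow> u < 1 \<Longrightarrow> 0 < polygonal_path_time m i u \<and> polygonal_path_time m i u < 1"
  by (induction m i u rule: polygonal_path_time.induct) auto

lemma polygonal_path_time_less:
  assumes "i < j" "j \<le> m" "0 < u" "u < 1" "0 < u'" "u' < 1"
  shows "polygonal_path_time m i u < polygonal_path_time m j u'"
  using assms
proof (induction m arbitrary: i j)
  case (Suc m)
  then obtain j' where j: "j = Suc j'"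
    by (cases j) auto
  show ?case
  proof (cases i)
    case 0
    then show ?thesis
      using j polygonal_path_time_bounds[of u' m j'] Suc.prems by simp
  next
    case (Suc i')
    then show ?thesis
      using Suc.IH[of i' j'] Suc.prems j by simp
  qed
qed simp

lemma polygonal_path_at_time:
  "length ps = m + 2 \<Longrightarrow> i \<le> m \<Longrightarrow> 0 < u \<Longrightarrow> u < 1 \<Longrightarrow>
     polygonal_path ps (polygonal_path_time m i u) = (1 - u) *\<^sub>R ps!i + u *\<^sub>R ps!Suc i"
proof (induction m arbitrary: ps i)
  case 0
  then obtain p q where "ps = [p, q]"
    by (cases ps; cases "tl ps") auto
  with 0 show ?case
    by (simp add: linepath_def)
next
  case (Suc m)
  then obtain p q r rest where ps: "ps = p # q # r # rest"
    by (cases ps; cases "tl ps"; cases "tl (tl ps)") auto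
  show ?case
  proof (cases i)
    case 0
    then show ?thesis
      using ps Suc.prems by (simp add: joinpaths_def linepath_def)
  next
    case (Suc i')
    have "0 < polygonal_path_time m i' u" "polygonal_path_time m i' u < 1"
      using polygonal_path_time_bounds Suc.prems by auto
    moreover have "polygonal_path (q # r # rest) (polygonal_path_time m i' u)
        = (1 - u) *\<^sub>R (q # r # rest)!i' + u *\<^sub>R (q # r # rest)!Suc i'"
      using Suc.IH[of "q # r # rest" i'] Suc.prems ps Suc by simp
    ultimately show ?thesis
      using ps Suc by (simp add: joinpaths_def)
  qed
qed

lemma polygon_vertices_nth: "i < n \<Longrightarrow> (map A [0..<n] @ [A 0]) ! i = A i"
  by (simp add: nth_append)

lemma polygon_vertices_nth_Suc:
  assumes "i < n"
  shows "(map A [0..<n] @ [A 0]) ! Suc i = A (Suc i mod n)"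
proof (cases "Suc i < n")
  case False
  with assms have "Suc i = n"
    by simp
  then show ?thesis
    by (simp add: nth_append)
qed (simp add: nth_append)

lemma path_image_polygon_boundary:
  assumes "1 \<le> n"
  shows "path_image (polygon_boundary n A) = (\<Union>k<n. closed_segment (A k) (A (Suc k mod n)))"
  unfolding polygon_boundary_def using assms
  by (subst path_image_polygonal_path)
    (auto simp: polygon_vertices_nth polygon_vertices_nth_Suc intro!: SUP_cong)

lemma polygon_boundary_closed: "pathfinish (polygon_boundary n A) = pathstart (polygon_boundary n A)"
proof -
  have "hd (map A [0..<n] @ [A 0]) = A 0"
    by (cases n) (simp_all add: hd_append upt_rec)
  then show ?thesis
    unfolding polygon_boundary_def by (simp add: pathstart_polygonal_path pathfinish_polygonal_path)
qed

lemma simple_polygon_open_edges_disjoint: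
  assumes sp: "simple_path (polygon_boundary n A)" and ij: "i < j" "j < n"
    and u: "0 < u" "u < 1" and u': "0 < u'" "u' < 1"
  shows "(1 - u) *\<^sub>R A i + u *\<^sub>R A (Suc i mod n) \<noteq> (1 - u') *\<^sub>R A j + u' *\<^sub>R A (Suc j mod n)"
proof
  define m where "m = n - 1"
  define t where "t = polygonal_path_time m i u"
  define t' where "t' = polygonal_path_time m j u'"
  have len: "length (map A [0..<n] @ [A 0]) = m + 2" and im: "i \<le> m" "j \<le> m"
    using ij by (auto simp: m_def)
  have "t < t'"
    unfolding t_def t'_def using ij im u u' by (intro polygonal_path_time_less) auto
  moreover have "0 < t" "t' < 1"
    using polygonal_path_time_bounds u u' unfolding t_def t'_def by auto
  moreover assume "(1 - u) *\<^sub>R A i + u *\<^sub>R A (Suc i mod n) = (1 - u') *\<^sub>R A j + u' *\<^sub>R A (Suc j mod n)"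
  then have "polygon_boundary n A t = polygon_boundary n A t'"
    unfolding polygon_boundary_def t_def t'_def using polygonal_path_at_time[OF len] im u u' ij
    by (simp add: polygon_vertices_nth polygon_vertices_nth_Suc)
  ultimately show False
    using sp unfolding simple_path_def loop_free_def by force
qed

section \<open>Barycentric coordinates\<close>

lemma cross2_cramer:
  assumes "cross2 u w \<noteq> 0"
  shows "v = (cross2 v w / cross2 u w) *\<^sub>R u + (cross2 u v / cross2 u w) *\<^sub>R w"
proof -
  have "cross2 v w * u$1 + cross2 u v * w$1 = v$1 * cross2 u w"
    and "cross2 v w * u$2 + cross2 u v * w$2 = v$2 * cross2 u w"
    unfolding cross2_def by algebra+
  then show ?thesis
    using assms by (simp add: vec_eq_iff forall_2 add_divide_distrib [symmetric])
qed

definition bary_p :: "real^2 \<Rightarrow> real^2 \<Rightarrow> real^2 \<Rightarrow> real^2 \<Rightarrow> real" where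
  "bary_p c p q x = cross2 (x - c) (q - c) / cross2 (p - c) (q - c)"

definition bary_q :: "real^2 \<Rightarrow> real^2 \<Rightarrow> real^2 \<Rightarrow> real^2 \<Rightarrow> real" where
  "bary_q c p q x = cross2 (p - c) (x - c) / cross2 (p - c) (q - c)"

context
  fixes c p q :: "real^2"
  assumes D: "cross2 (p - c) (q - c) \<noteq> 0"
begin

lemma bary_decomposition: "x = c + bary_p c p q x *\<^sub>R (p - c) + bary_q c p q x *\<^sub>R (q - c)"
  using cross2_cramer[OF D, of "x - c"] unfolding bary_p_def bary_q_def
  by (simp add: algebra_simps)

lemma bary_coords:
  "bary_p c p q (c + s *\<^sub>R (p - c) + t *\<^sub>R (q - c)) = s"
  "bary_q c p q (c + s *\<^sub>R (p - c) + t *\<^sub>R (q - c)) = t"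
  using D unfolding bary_p_def bary_q_def by (simp_all add: cross2_def field_simps)

lemma bary_shift:
  "bary_p c p q (x + s *\<^sub>R (p - c)) = bary_p c p q x + s"
  "bary_q c p q (x + s *\<^sub>R (p - c)) = bary_q c p q x"
  "bary_q c p q (x + s *\<^sub>R (q - c)) = bary_q c p q x + s"
  "bary_p c p q (c + s *\<^sub>R (x - c)) = s * bary_p c p q x"
  "bary_q c p q (c + s *\<^sub>R (x - c)) = s * bary_q c p q x"
proof -
  let ?b = "bary_p c p q x" and ?g = "bary_q c p q x"
  have x: "x = c + ?b *\<^sub>R (p - c) + ?g *\<^sub>R (q - c)"
    by (rule bary_decomposition)
  have e1: "x + s *\<^sub>R (p - c) = c + (?b + s) *\<^sub>R (p - c) + ?g *\<^sub>R (q - c)"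
    by (subst x) (simp add: algebra_simps)
  show "bary_p c p q (x + s *\<^sub>R (p - c)) = ?b + s" "bary_q c p q (x + s *\<^sub>R (p - c)) = ?g"
    unfolding e1 by (rule bary_coords)+
  have e2: "x + s *\<^sub>R (q - c) = c + ?b *\<^sub>R (p - c) + (?g + s) *\<^sub>R (q - c)"
    by (subst x) (simp add: algebra_simps)
  show "bary_q c p q (x + s *\<^sub>R (q - c)) = ?g + s"
    unfolding e2 by (rule bary_coords)
  have e3: "c + s *\<^sub>R (x - c) = c + (s * ?b) *\<^sub>R (p - c) + (s * ?g) *\<^sub>R (q - c)"
    by (subst x) (simp add: algebra_simps)
  show "bary_p c p q (c + s *\<^sub>R (x - c)) = s * ?b" "bary_q c p q (c + s *\<^sub>R (x - c)) = s * ?g"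
    unfolding e3 by (rule bary_coords)+
qed

lemma mem_triangle_iff_bary:
  "x \<in> convex hull {c, p, q} \<longleftrightarrow>
     0 \<le> bary_p c p q x \<and> 0 \<le> bary_q c p q x \<and> bary_p c p q x + bary_q c p q x \<le> 1"
proof
  assume "x \<in> convex hull {c, p, q}"
  then obtain u v w where uvw: "0 \<le> u" "0 \<le> v" "0 \<le> w" "u + v + w = 1"
    and x: "x = u *\<^sub>R c + v *\<^sub>R p + w *\<^sub>R q"
    unfolding convex_hull_3 by blast
  have "x = c + v *\<^sub>R (p - c) + w *\<^sub>R (q - c)"
  proof -
    have u: "u = 1 - v - w"
      using uvw(4) by simp
    show ?thesis
      unfolding x u by (simp add: algebra_simps)
  qed
  then show "0 \<le> bary_p c p q x \<and> 0 \<le> bary_q c p q x \<and> bary_p c p q x + bary_q c p q x \<le> 1"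
    using bary_coords[of v w] uvw by auto
next
  assume h: "0 \<le> bary_p c p q x \<and> 0 \<le> bary_q c p q x \<and> bary_p c p q x + bary_q c p q x \<le> 1"
  have "x = (1 - bary_p c p q x - bary_q c p q x) *\<^sub>R c + bary_p c p q x *\<^sub>R p + bary_q c p q x *\<^sub>R q"
    using bary_decomposition[of x] by (simp add: algebra_simps)
  also have "\<dots> \<in> convex hull {c, p, q}"
    using h by (intro in_convex_hull_3I) auto
  finally show "x \<in> convex hull {c, p, q}" .
qed

lemma interior_triangle_bary_pos:
  assumes x: "x \<in> interior (convex hull {c, p, q})"
  shows "0 < bary_p c p q x" "0 < bary_q c p q x" "bary_p c p q x + bary_q c p q x < 1"
proof -
  obtain e where e: "0 < e" "ball x e \<subseteq> convex hull {c, p, q}"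
    using x unfolding mem_interior by blast
  have inside: "x + t *\<^sub>R v \<in> convex hull {c, p, q}" if "v \<noteq> 0" "\<bar>t\<bar> = e / (2 * norm v)" for v t
  proof -
    have "dist x (x + t *\<^sub>R v) = e / 2"
      using that by (simp add: dist_norm)
    then show ?thesis
      using e by auto
  qed
  have pc: "p - c \<noteq> 0" and qc: "q - c \<noteq> 0"
    using D by (auto simp: cross2_def)
  define d1 where "d1 = e / (2 * norm (p - c))"
  define d2 where "d2 = e / (2 * norm (q - c))"
  have d: "0 < d1" "0 < d2"
    using e pc qc by (simp_all add: d1_def d2_def)
  have "x + (- d1) *\<^sub>R (p - c) \<in> convex hull {c, p, q}"
    using d e by (intro inside[OF pc]) (simp add: d1_def)
  then show "0 < bary_p c p q x"
    using d bary_shift(1)[of x "- d1"] by (simp add: mem_triangle_iff_bary)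
  have "x + (- d2) *\<^sub>R (q - c) \<in> convex hull {c, p, q}"
    using d e by (intro inside[OF qc]) (simp add: d2_def)
  then show "0 < bary_q c p q x"
    using d bary_shift(3)[of x "- d2"] by (simp add: mem_triangle_iff_bary)
  have "x + d1 *\<^sub>R (p - c) \<in> convex hull {c, p, q}"
    using d e by (intro inside[OF pc]) (simp add: d1_def)
  then show "bary_p c p q x + bary_q c p q x < 1"
    using d bary_shift(1,2)[of x d1] by (simp add: mem_triangle_iff_bary)
qed

lemma bary_pos_in_interior_triangle:
  assumes "0 < bary_p c p q x" "0 < bary_q c p q x" "bary_p c p q x + bary_q c p q x < 1"
  shows "x \<in> interior (convex hull {c, p, q})"
proof -
  define U where "U = {x. 0 < bary_p c p q x \<and> 0 < bary_q c p q x \<and> bary_p c p q x + bary_q c p q x < 1}"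
  have D': "(p - c)$1 * (q - c)$2 - (p - c)$2 * (q - c)$1 \<noteq> 0"
    using D by (simp add: cross2_def)
  have "continuous_on UNIV (bary_p c p q)" "continuous_on UNIV (bary_q c p q)"
    unfolding bary_p_def bary_q_def cross2_def
    by (intro continuous_on_divide continuous_intros; use D' in auto)+
  then have "open U"
    unfolding U_def by (intro open_Collect_conj open_Collect_less continuous_on_add continuous_on_const)
  moreover have "U \<subseteq> convex hull {c, p, q}"
    by (auto simp: U_def mem_triangle_iff_bary)
  moreover have "x \<in> U"
    using assms by (simp add: U_def)
  ultimately show ?thesis
    using interior_maximal by blast
qed

lemma ray_exits_triangle_on_open_edge:
  assumes z: "z \<in> interior (convex hull {c, p, q})"
  obtains g where "0 < g" "g < 1"
    "c + (1 / (bary_p c p q z + bary_q c p q z)) *\<^sub>R (z - c) = (1 - g) *\<^sub>R p + g *\<^sub>R q"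
proof -
  let ?b = "bary_p c p q z" and ?g = "bary_q c p q z"
  note pos = interior_triangle_bary_pos[OF z]
  define s where "s = ?b + ?g"
  have s: "0 < s"
    using pos by (simp add: s_def)
  have zc: "z - c = ?b *\<^sub>R (p - c) + ?g *\<^sub>R (q - c)"
    using bary_decomposition[of z] by (simp add: algebra_simps)
  have b: "?b / s = 1 - ?g / s"
    using s by (simp add: s_def field_simps)
  have "c + (1 / s) *\<^sub>R (z - c) = c + (?b / s) *\<^sub>R (p - c) + (?g / s) *\<^sub>R (q - c)"
    unfolding zc by (simp add: scaleR_add_right)
  also have "\<dots> = (1 - ?g / s) *\<^sub>R p + (?g / s) *\<^sub>R q"
    unfolding b by (simp add: algebra_simps)
  finally have "c + (1 / s) *\<^sub>R (z - c) = (1 - ?g / s) *\<^sub>R p + (?g / s) *\<^sub>R q" .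
  moreover have "0 < ?g / s" "?g / s < 1"
    using pos s by (simp_all add: s_def field_simps)
  ultimately show ?thesis
    using that unfolding s_def by blast
qed

lemma ray_point_in_interior_triangle:
  assumes "z \<in> interior (convex hull {c, p, q})"
    and "0 < t" "t * (bary_p c p q z + bary_q c p q z) < 1"
  shows "c + t *\<^sub>R (z - c) \<in> interior (convex hull {c, p, q})"
  using interior_triangle_bary_pos[OF assms(1)] assms(2,3)
  by (intro bary_pos_in_interior_triangle) (simp_all add: bary_shift(4,5) distrib_left)

end

section \<open>Decomposing a nice polygon into triangles\<close>

lemma simple_loop_homeomorphic_sphere:
  fixes g :: "real \<Rightarrow> real^2"
  assumes "simple_path g" "pathfinish g = pathstart g"
  shows "path_image g homeomorphic sphere (0::real^2) 1"
proof -
  have "path_image g homeomorphic sphere (0::complex) 1"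
    by (rule homeomorphic_simple_path_image_circle[OF assms]) simp
  moreover have "sphere (0::complex) 1 homeomorphic sphere (0::real^2) 1"
    by (rule homeomorphic_spheres_gen) auto
  ultimately show ?thesis
    by (rule homeomorphic_trans)
qed

lemma simple_loop_frontier_outside:
  fixes g :: "real \<Rightarrow> real^2"
  assumes "simple_path g" "pathfinish g = pathstart g"
  shows "frontier (outside (path_image g)) = path_image g"
proof -
  have "bounded (path_image g)"
    using assms(1) by (simp add: bounded_simple_path_image)
  then have "outside (path_image g) \<in> components (- path_image g)"
    by (simp add: outside_in_components connected_outside outside_bounded_nonempty)
  then show ?thesis
    by (rule Jordan_Brouwer_frontier[OF simple_loop_homeomorphic_sphere[OF assms]]) simp
qed

lemma simple_loop_inside_nonempty:
  fixes g :: "real \<Rightarrow> real^2"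
  assumes "simple_path g" "pathfinish g = pathstart g"
  shows "inside (path_image g) \<noteq> {}"
proof
  assume "inside (path_image g) = {}"
  then have "- path_image g = outside (path_image g)"
    using inside_Un_outside[of "path_image g"] by simp
  moreover have "connected (outside (path_image g))"
    using assms(1) by (simp add: bounded_simple_path_image connected_outside)
  moreover have "\<not> connected (- path_image g)"
    by (rule Jordan_Brouwer_separation[OF simple_loop_homeomorphic_sphere[OF assms]]) simp
  ultimately show False
    by simp
qed

lemma kernel_triangle_subset_polygon_region:
  assumes kc: "c \<in> kernel (polygon_region n A)" and n: "1 \<le> n" and k: "k < n"
  shows "convex hull {c, A k, A (Suc k mod n)} \<subseteq> polygon_region n A"
proof
  fix x assume "x \<in> convex hull {c, A k, A (Suc k mod n)}"
  then obtain y where y: "y \<in> closed_segment (A k) (A (Suc k mod n))" and x: "x \<in> closed_segment c y"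
    by (subst (asm) convex_hull_insert_segments) (auto simp flip: segment_convex_hull)
  have "y \<in> polygon_region n A"
    using y k path_image_polygon_boundary[OF n] by (auto simp: polygon_region_def)
  then have "closed_segment c y \<subseteq> polygon_region n A"
    using kc by (simp add: kernel_def)
  then show "x \<in> polygon_region n A"
    using x by blast
qed

lemma ray_unbounded:
  fixes c x :: "'a::real_normed_vector"
  assumes "x \<noteq> c"
  shows "\<not> bounded ((\<lambda>s. c + s *\<^sub>R (x - c)) ` {1..})"
proof
  assume "bounded ((\<lambda>s. c + s *\<^sub>R (x - c)) ` {1..})"
  then obtain B where B: "\<And>s. s \<ge> 1 \<Longrightarrow> norm (c + s *\<^sub>R (x - c)) \<le> B"
    unfolding bounded_iff by auto
  have nx: "0 < norm (x - c)"
    using assms by simp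
  define s where "s = (\<bar>B\<bar> + norm c + 1) / norm (x - c) + 1"
  have s1: "s \<ge> 1"
    using nx by (simp add: s_def)
  have "s * norm (x - c) \<ge> \<bar>B\<bar> + norm c + 1"
    using nx by (simp add: s_def field_simps)
  moreover have "norm (s *\<^sub>R (x - c)) \<le> norm (c + s *\<^sub>R (x - c)) + norm c"
    using norm_triangle_ineq4[of "c + s *\<^sub>R (x - c)" c] by simp
  ultimately show False
    using B[OF s1] s1 by simp
qed

lemma inside_ray_meets:
  fixes c x :: "'a::real_normed_vector"
  assumes xi: "x \<in> inside S" and xc: "x \<noteq> c"
  obtains s where "1 \<le> s" "c + s *\<^sub>R (x - c) \<in> S"
proof -
  define R where "R = (\<lambda>s. c + s *\<^sub>R (x - c)) ` {1..}"
  have "R \<inter> S \<noteq> {}"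
  proof
    assume "R \<inter> S = {}"
    moreover have "connected R" "x \<in> R"
      unfolding R_def
      by (intro connected_continuous_image continuous_intros, simp add: is_interval_connected)
        (rule image_eqI[of _ _ 1], auto)
    ultimately have "R \<subseteq> connected_component_set (- S) x"
      by (intro connected_component_maximal) auto
    moreover have "bounded (connected_component_set (- S) x)"
      using xi by (simp add: inside_def)
    ultimately show False
      using ray_unbounded[OF xc] bounded_subset unfolding R_def by blast
  qed
  then show ?thesis
    using that unfolding R_def by auto
qed

lemma polygon_region_subset_triangles:
  assumes n: "1 \<le> n"
  shows "polygon_region n A \<subseteq> (\<Union>k<n. convex hull {c, A k, A (Suc k mod n)})"
proof
  fix x assume xP: "x \<in> polygon_region n A"
  define S where "S = path_image (polygon_boundary n A)"
  have seg: "closed_segment (A k) (A (Suc k mod n)) \<subseteq> convex hull {c, A k, A (Suc k mod n)}" for k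
    unfolding segment_convex_hull by (rule hull_mono) blast
  have S: "S \<subseteq> (\<Union>k<n. convex hull {c, A k, A (Suc k mod n)})"
    unfolding S_def path_image_polygon_boundary[OF n] using seg by blast
  consider "x \<in> S" | "x = c" | "x \<in> inside S" "x \<noteq> c"
    using xP unfolding polygon_region_def S_def by blast
  then show "x \<in> (\<Union>k<n. convex hull {c, A k, A (Suc k mod n)})"
  proof cases
    case 2
    have "c \<in> convex hull {c, A 0, A (Suc 0 mod n)}"
      by (rule hull_inc) simp
    moreover have "0 \<in> {..<n}"
      using n by simp
    ultimately show ?thesis
      using 2 by blast
  next
    case 3
    then obtain s where s: "1 \<le> s" and "c + s *\<^sub>R (x - c) \<in> S"
      by (rule inside_ray_meets)
    then obtain k where k: "k < n"
      and y: "c + s *\<^sub>R (x - c) \<in> convex hull {c, A k, A (Suc k mod n)}"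
      using S by blast
    have "x = (1 - 1/s) *\<^sub>R c + (1/s) *\<^sub>R (c + s *\<^sub>R (x - c))"
      using s by (simp add: algebra_simps)
    then have "x \<in> closed_segment c (c + s *\<^sub>R (x - c))"
      unfolding in_segment using s by (intro exI[of _ "1/s"]) auto
    also have "\<dots> \<subseteq> convex hull {c, A k, A (Suc k mod n)}"
      by (rule closed_segment_subset_convex_hull[OF hull_inc y]) simp
    finally show ?thesis
      using k by blast
  qed (use S in blast)
qed

lemma polygon_region_eq_Union_triangles:
  assumes "c \<in> kernel (polygon_region n A)" "1 \<le> n"
  shows "polygon_region n A = (\<Union>k<n. triangle c (A k) (A (Suc k mod n)))"
  using kernel_triangle_subset_polygon_region[OF assms] polygon_region_subset_triangles[OF assms(2), of A c]
  by (auto simp: triangle_def)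

text \<open>Points of the boundary are limits of points outside the region, while the interior of a
  kernel triangle lies inside the region.\<close>
lemma polygon_boundary_disjoint_interior_triangle:
  assumes sp: "simple_polygon n A" and kc: "c \<in> kernel (polygon_region n A)" and k: "k < n"
    and y: "y \<in> path_image (polygon_boundary n A)"
  shows "y \<notin> interior (convex hull {c, A k, A (Suc k mod n)})"
proof
  let ?T = "convex hull {c, A k, A (Suc k mod n)}" and ?S = "path_image (polygon_boundary n A)"
  assume "y \<in> interior ?T"
  then obtain e where e: "0 < e" "ball y e \<subseteq> interior ?T"
    using open_interior open_contains_ball by blast
  have n: "1 \<le> n" and spp: "simple_path (polygon_boundary n A)"
    using sp by (auto simp: simple_polygon_def)
  have "y \<in> closure (outside ?S)"
    using y simple_loop_frontier_outside[OF spp polygon_boundary_closed] unfolding frontier_def by blast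
  then obtain z where z: "z \<in> outside ?S" "dist y z < e"
    using closure_approachableD e(1) by blast
  then have "z \<in> ?T"
    using e(2) interior_subset by (fastforce simp: dist_commute)
  then have "z \<in> polygon_region n A"
    using kernel_triangle_subset_polygon_region[OF kc n k] by blast
  then show False
    using z(1) by (simp add: polygon_region_def outside_inside)
qed

lemma interior_kernel_triangles_disjoint_wlog:
  assumes sp: "simple_polygon n A" and kc: "c \<in> kernel (polygon_region n A)"
    and j: "j < n" and k: "k < n" and jk: "j \<noteq> k"
    and Dj: "cross2 (A j - c) (A (Suc j mod n) - c) \<noteq> 0"
    and Dk: "cross2 (A k - c) (A (Suc k mod n) - c) \<noteq> 0"
    and zj: "z \<in> interior (convex hull {c, A j, A (Suc j mod n)})"
    and zk: "z \<in> interior (convex hull {c, A k, A (Suc k mod n)})"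
    and le: "bary_p c (A k) (A (Suc k mod n)) z + bary_q c (A k) (A (Suc k mod n)) z
             \<le> bary_p c (A j) (A (Suc j mod n)) z + bary_q c (A j) (A (Suc j mod n)) z"
  shows False
proof -
  define sj where "sj = bary_p c (A j) (A (Suc j mod n)) z + bary_q c (A j) (A (Suc j mod n)) z"
  define sk where "sk = bary_p c (A k) (A (Suc k mod n)) z + bary_q c (A k) (A (Suc k mod n)) z"
  define y where "y = c + (1 / sj) *\<^sub>R (z - c)"
  have n: "1 \<le> n" and spp: "simple_path (polygon_boundary n A)"
    using sp by (auto simp: simple_polygon_def)
  have sj0: "0 < sj"
    using interior_triangle_bary_pos[OF Dj zj] by (simp add: sj_def)
  obtain g where g: "0 < g" "g < 1" and yj: "y = (1 - g) *\<^sub>R A j + g *\<^sub>R A (Suc j mod n)"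
    using ray_exits_triangle_on_open_edge[OF Dj zj] unfolding y_def sj_def by blast
  have "y \<in> closed_segment (A j) (A (Suc j mod n))"
    unfolding yj in_segment using g by (intro exI[of _ g]) simp
  then have yS: "y \<in> path_image (polygon_boundary n A)"
    using path_image_polygon_boundary[OF n] j by blast
  show False
  proof (cases "sk < sj")
    case True
    have "y \<in> interior (convex hull {c, A k, A (Suc k mod n)})"
      unfolding y_def using sj0 True
      by (intro ray_point_in_interior_triangle[OF Dk zk]) (simp_all add: sk_def[symmetric] field_simps)
    then show False
      using polygon_boundary_disjoint_interior_triangle[OF sp kc k yS] by blast
  next
    case False
    then have "sk = sj"
      using le by (simp add: sk_def sj_def)
    then obtain g' where g': "0 < g'" "g' < 1" and yk: "y = (1 - g') *\<^sub>R A k + g' *\<^sub>R A (Suc k mod n)"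
      using ray_exits_triangle_on_open_edge[OF Dk zk] unfolding y_def sk_def sj_def by metis
    show False
      using jk simple_polygon_open_edges_disjoint[OF spp _ j g' g] simple_polygon_open_edges_disjoint[OF spp _ k g g']
        yj yk by (cases "j < k") auto
  qed
qed

lemma negligible_Int_kernel_triangles:
  assumes "simple_polygon n A" "c \<in> kernel (polygon_region n A)" "j < n" "k < n" "j \<noteq> k"
    and "cross2 (A j - c) (A (Suc j mod n) - c) \<noteq> 0"
    and "cross2 (A k - c) (A (Suc k mod n) - c) \<noteq> 0"
  shows "negligible (convex hull {c, A j, A (Suc j mod n)} \<inter> convex hull {c, A k, A (Suc k mod n)})"
proof (rule ccontr)
  let ?Tj = "convex hull {c, A j, A (Suc j mod n)}" and ?Tk = "convex hull {c, A k, A (Suc k mod n)}"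
  assume "\<not> negligible (?Tj \<inter> ?Tk)"
  then have "interior (?Tj \<inter> ?Tk) \<noteq> {}"
    using negligible_convex_interior convex_Int convex_convex_hull by blast
  then obtain z where zj: "z \<in> interior ?Tj" and zk: "z \<in> interior ?Tk"
    by (auto simp: interior_Int)
  show False
  proof (cases "bary_p c (A k) (A (Suc k mod n)) z + bary_q c (A k) (A (Suc k mod n)) z
             \<le> bary_p c (A j) (A (Suc j mod n)) z + bary_q c (A j) (A (Suc j mod n)) z")
    case True
    then show False
      by (rule interior_kernel_triangles_disjoint_wlog[OF assms zj zk])
  next
    case False
    then show False
      using interior_kernel_triangles_disjoint_wlog[OF assms(1,2,4,3) _ assms(7,6) zk zj] assms(5) by simp
  qed
qed

lemma nice_polygon_area_pos:
  assumes "nice_polygon n A c"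
  shows "0 < measure lebesgue (triangle c (A 0) (A (Suc 0 mod n)))"
proof -
  define T where "T k = triangle c (A k) (A (Suc k mod n))" for k
  define S where "S = path_image (polygon_boundary n A)"
  have kc: "c \<in> kernel (polygon_region n A)" and n: "1 \<le> n"
    and spp: "simple_path (polygon_boundary n A)"
    using assms by (auto simp: nice_polygon_def simple_polygon_def)
  have area: "measure lebesgue (T k) = measure lebesgue (T 0)" if "k < n" for k
    using assms that unfolding nice_polygon_def T_def by blast
  have lT: "T k \<in> lmeasurable" for k
    by (simp add: T_def triangle_def lmeasurable_compact finite_imp_compact_convex_hull)
  have "open (inside S)"
    unfolding S_def by (intro open_inside closed_path_image simple_path_imp_path spp)
  moreover have "inside S \<noteq> {}"
    unfolding S_def by (rule simple_loop_inside_nonempty[OF spp polygon_boundary_closed])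
  ultimately have "\<not> negligible (inside S)"
    using open_not_negligible by blast
  moreover have "inside S \<subseteq> (\<Union>k<n. T k)"
    using polygon_region_eq_Union_triangles[OF kc n] unfolding S_def T_def polygon_region_def by blast
  ultimately have "\<not> negligible (\<Union>k<n. T k)"
    using negligible_subset by blast
  then obtain k where k: "k < n" "\<not> negligible (T k)"
    using negligible_Union[of "T ` {..<n}"] by blast
  then have "measure lebesgue (T k) \<noteq> 0"
    using negligible_iff_measure0[OF lT] by simp
  then have "0 < measure lebesgue (T 0)"
    using area[OF k(1)] measure_nonneg[of lebesgue "T 0"] by linarith
  then show ?thesis
    unfolding T_def .
qed

lemma nice_polygon_nondegenerate:
  assumes "nice_polygon n A c" "k < n"
  shows "cross2 (A k - c) (A (Suc k mod n) - c) \<noteq> 0"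
proof
  assume "cross2 (A k - c) (A (Suc k mod n) - c) = 0"
  then have "measure lebesgue (triangle c (A k) (A (Suc k mod n))) = 0"
    by (simp add: triangle_def measure_triangle)
  moreover have "measure lebesgue (triangle c (A k) (A (Suc k mod n)))
      = measure lebesgue (triangle c (A 0) (A (Suc 0 mod n)))"
    using assms unfolding nice_polygon_def by blast
  ultimately show False
    using nice_polygon_area_pos[OF assms(1)] by linarith
qed

lemma avg_area_nice_polygon:
  assumes nice: "nice_polygon n A c"
    and f: "\<And>k. k < n \<Longrightarrow> f absolutely_integrable_on triangle c (A k) (A (Suc k mod n))"
  shows "avg_area f (polygon_region n A)
           = (\<Sum>k<n. integral (triangle c (A k) (A (Suc k mod n))) f)
             / (real n * measure lebesgue (triangle c (A 0) (A (Suc 0 mod n))))"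
proof -
  define T where "T k = triangle c (A k) (A (Suc k mod n))" for k
  define \<mu> where "\<mu> = measure lebesgue (T 0)"
  have sp: "simple_polygon n A" and kc: "c \<in> kernel (polygon_region n A)" and n: "1 \<le> n"
    using nice unfolding nice_polygon_def simple_polygon_def by auto
  have area: "measure lebesgue (T k) = \<mu>" if "k \<in> {..<n}" for k
    using nice that unfolding nice_polygon_def T_def \<mu>_def by blast
  have lT: "T k \<in> lmeasurable" for k
    unfolding T_def triangle_def by (simp add: lmeasurable_compact finite_imp_compact_convex_hull)
  have P: "polygon_region n A = (\<Union>k\<in>{..<n}. T k)"
    using polygon_region_eq_Union_triangles[OF kc n] unfolding T_def by simp
  have "negligible (T j \<inter> T k)" if "j < n" "k < n" "j \<noteq> k" for j k
    unfolding T_def triangle_def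
    by (rule negligible_Int_kernel_triangles[OF sp kc that
          nice_polygon_nondegenerate[OF nice that(1)] nice_polygon_nondegenerate[OF nice that(2)]])
  then have pw: "pairwise (\<lambda>i j. negligible (T i \<inter> T j)) {..<n}"
    unfolding pairwise_def by simp
  have "(f has_integral integral (T k) f) (T k)" if "k \<in> {..<n}" for k
    using f[of k] that unfolding T_def by (simp add: absolutely_integrable_on_def has_integral_integral)
  then have "integral (polygon_region n A) f = (\<Sum>k<n. integral (T k) f)"
    unfolding P by (rule integral_unique[OF has_integral_UN[OF finite_lessThan _ pw]])
  moreover have "measure lebesgue (polygon_region n A) = real n * \<mu>"
    unfolding P measure_negligible_finite_Union_image[OF finite_lessThan lT pw] by (simp add: area)
  ultimately show ?thesis
    unfolding avg_area_def T_def \<mu>_def by (rule arg_cong2[where f = "(/)"])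
qed

section \<open>Averaging over alternating vertices\<close>

lemma sum_Suc_mod: "(\<Sum>k<n. g (Suc k mod n)) = (\<Sum>k<n. g k)"
proof (cases n)
  case (Suc m)
  have "(\<Sum>k<Suc m. g (Suc k mod Suc m)) = (\<Sum>k<m. g (Suc k mod Suc m)) + g (Suc m mod Suc m)"
    by simp
  also have "(\<Sum>k<m. g (Suc k mod Suc m)) = (\<Sum>k<m. g (Suc k))"
    by (rule sum.cong) auto
  also have "(\<Sum>k<m. g (Suc k)) + g (Suc m mod Suc m) = (\<Sum>k<Suc m. g k)"
    by (subst sum.lessThan_Suc_shift) (simp add: add.commute)
  finally show ?thesis
    using Suc by simp
qed simp

lemma even_Suc_mod_iff:
  assumes "even n" "k < n"
  shows "even (Suc k mod n) \<longleftrightarrow> odd k"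
proof (cases "Suc k < n")
  case False
  with assms(2) have "n = Suc k"
    by simp
  with assms(1) show ?thesis
    by simp
qed simp

lemma sum_linear_combination:
  fixes r u v :: real
  shows "(\<Sum>k\<in>K. r * (u * a k + v * b k)) = r * (u * (\<Sum>k\<in>K. a k) + v * (\<Sum>k\<in>K. b k))"
  by (simp add: sum.distrib sum_distrib_left distrib_left)

text \<open>Each term I k is bounded using the endpoint of edge k satisfying Q as the apex. When Q
  alternates along the cycle, every vertex is an endpoint of exactly two edges.\<close>
lemma sum_le_alternating:
  fixes I F S :: "nat \<Rightarrow> real"
  assumes alt: "\<And>k. k < n \<Longrightarrow> Q (Suc k mod n) \<longleftrightarrow> \<not> Q k"
    and bound: "\<And>i j k. k < n \<Longrightarrow> {i, j} = {k, Suc k mod n} \<Longrightarrow> Q i \<Longrightarrow>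
                  I k \<le> \<mu> * (1/3 * F i + 2/3 * S j)"
  shows "(\<Sum>k<n. I k)
           \<le> 2 * \<mu> * (1/3 * (\<Sum>k\<in>{k. k < n \<and> Q k}. F k) + 2/3 * (\<Sum>k\<in>{k. k < n \<and> \<not> Q k}. S k))"
proof -
  define FQ where "FQ k = (if Q k then F k else 0)" for k
  define SQ where "SQ k = (if \<not> Q k then S k else 0)" for k
  have "I k \<le> \<mu> * (1/3 * (FQ k + FQ (Suc k mod n)) + 2/3 * (SQ k + SQ (Suc k mod n)))" if "k < n" for k
    using bound[OF that, of k "Suc k mod n"] bound[OF that, of "Suc k mod n" k] alt[OF that]
    by (cases "Q k") (simp_all add: FQ_def SQ_def insert_commute)
  then have "(\<Sum>k<n. I k) \<le> (\<Sum>k<n. \<mu> * (1/3 * (FQ k + FQ (Suc k mod n)) + 2/3 * (SQ k + SQ (Suc k mod n))))"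
    by (intro sum_mono) simp
  also have "\<dots> = \<mu> * (1/3 * (\<Sum>k<n. FQ k + FQ (Suc k mod n)) + 2/3 * (\<Sum>k<n. SQ k + SQ (Suc k mod n)))"
    by (rule sum_linear_combination)
  also have "\<dots> = 2 * \<mu> * (1/3 * (\<Sum>k<n. FQ k) + 2/3 * (\<Sum>k<n. SQ k))"
    by (simp add: sum.distrib sum_Suc_mod)
  also have "(\<Sum>k<n. FQ k) = (\<Sum>k\<in>{k. k < n \<and> Q k}. F k)"
    unfolding FQ_def by (simp flip: sum.inter_filter)
  also have "(\<Sum>k<n. SQ k) = (\<Sum>k\<in>{k. k < n \<and> \<not> Q k}. S k)"
    unfolding SQ_def by (simp flip: sum.inter_filter)
  finally show ?thesis .
qed

lemma average_le_alternating:
  fixes I F S :: "nat \<Rightarrow> real"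
  assumes "0 < \<mu>" "0 < n"
    and "\<And>k. k < n \<Longrightarrow> Q (Suc k mod n) \<longleftrightarrow> \<not> Q k"
    and "\<And>i j k. k < n \<Longrightarrow> {i, j} = {k, Suc k mod n} \<Longrightarrow> Q i \<Longrightarrow>
           I k \<le> \<mu> * (1/3 * F i + 2/3 * S j)"
  shows "(\<Sum>k<n. I k) / (real n * \<mu>)
           \<le> 1/3 * (1 / (real n / 2)) * (\<Sum>k\<in>{k. k < n \<and> Q k}. F k)
             + 2/3 * (1 / (real n / 2)) * (\<Sum>k\<in>{k. k < n \<and> \<not> Q k}. S k)"
proof -
  let ?x = "\<Sum>k\<in>{k. k < n \<and> Q k}. F k" and ?y = "\<Sum>k\<in>{k. k < n \<and> \<not> Q k}. S k"
  have "(\<Sum>k<n. I k) / (real n * \<mu>) \<le> 2 * \<mu> * (1/3 * ?x + 2/3 * ?y) / (real n * \<mu>)"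
    using sum_le_alternating[of n Q I \<mu> F S] assms by (intro divide_right_mono) auto
  also have "\<dots> = 1/3 * (1 / (real n / 2)) * ?x + 2/3 * (1 / (real n / 2)) * ?y"
    using assms(1,2) by (simp add: field_simps)
  finally show ?thesis .
qed

theorem theorem4p2:
  fixes n :: nat and A :: "nat \<Rightarrow> real^2" and c :: "real^2" and f :: "real^2 \<Rightarrow> real"
  assumes nice: "nice_polygon n A c"
    and even_n: "even n"
    and conv: "\<And>k. k < n \<Longrightarrow> convex_on (triangle c (A k) (A (Suc k mod n))) f"
  shows "(avg_area f (polygon_region n A)
           \<le> 1/3 * (1 / (real n / 2)) * (\<Sum>k\<in>{k. k < n \<and> odd k}. f (A k))
             + 2/3 * (1 / (real n / 2)) * (\<Sum>k\<in>{k. k < n \<and> even k}. avg_segment f c (A k)))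
         \<and> (avg_area f (polygon_region n A)
           \<le> 1/3 * (1 / (real n / 2)) * (\<Sum>k\<in>{k. k < n \<and> even k}. f (A k))
             + 2/3 * (1 / (real n / 2)) * (\<Sum>k\<in>{k. k < n \<and> odd k}. avg_segment f c (A k)))"
proof -
  define T where "T k = triangle c (A k) (A (Suc k mod n))" for k
  define \<mu> where "\<mu> = measure lebesgue (T 0)"
  have \<mu>: "0 < \<mu>"
    using nice_polygon_area_pos[OF nice] unfolding \<mu>_def T_def .
  have n: "0 < n" and area: "\<And>k. k < n \<Longrightarrow> measure lebesgue (T k) = \<mu>"
    using nice unfolding nice_polygon_def simple_polygon_def T_def \<mu>_def by auto
  have "f absolutely_integrable_on T k" if "k < n" for k
    using conv[OF that] unfolding T_def triangle_def by (rule convex_on_triangle_absolutely_integrable_on)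
  then have avg: "avg_area f (polygon_region n A) = (\<Sum>k<n. integral (T k) f) / (real n * \<mu>)"
    unfolding T_def \<mu>_def by (rule avg_area_nice_polygon[OF nice])
  have bound: "integral (T k) f \<le> \<mu> * (1/3 * f (A i) + 2/3 * avg_segment f c (A j))"
    if "k < n" "{i, j} = {k, Suc k mod n}" for i j k
  proof -
    have "{A i, A j} = {A k, A (Suc k mod n)}"
      using that(2) by (metis image_empty image_insert)
    with integral_convex_on_triangle_le_apex[OF conv[OF that(1)]] show ?thesis
      using area[OF that(1)] by (simp add: T_def)
  qed
  show ?thesis
    unfolding avg using even_Suc_mod_iff[OF even_n] bound
    by (intro conjI average_le_alternating[where Q = odd, unfolded not_not]
        average_le_alternating[where Q = even] \<mu> n) auto
qed

end
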